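(* Let $(M,\Sigma)$ be a measurable space, $r\ge1$, and $\mu_1,\dots,\mu_r$ non-atomic countably additive finite measures on $\Sigma$. Let $(H_k)_{k\ge1}$ be measurable sets and $(h_k)_{k\ge1}$ indices in $\{1,\dots,r\}$ such that for every $k$: $H_k\subseteq M\setminus\bigcup_{i=1}^{k-1}H_i$, $H_k$ has a gentleman's solution (a partition $H_k=F_1\sqcup\dots\sqcup F_r$ with $\mu_i(F_i)\le\mu_i(F_j)$ for all $i,j$), and $\mu_{h_k}(H_k)\ge 2^{-(r-1)}\mu_{h_k}\bigl(M\setminus\bigcup_{i=1}^{k-1}H_i\bigr)$. Let $\ell\in\{1,\dots,r\}$ be an index with $h_k=\ell$ for infinitely many $k$, and let $k_1<k_2<\dots$ be all indices $k$ with $h_k=\ell$. Then for every $n\ge1$, $$\mu_\ell\Bigl(M\setminus\bigsqcup_{i=1}^{k_n}H_i\Bigr)\le\Bigl(\frac{2^{r-1}-1}{2^{r-1}}\Bigr)^{n}\mu_\ell(M).$$ *)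

theory Defs
  imports "HOL-Analysis.Analysis" "HOL-Probability.Probability"
begin

definition nonatomic :: "'a measure \<Rightarrow> bool" where
  "nonatomic \<mu> \<longleftrightarrow> (\<forall>A\<in>sets \<mu>. emeasure \<mu> A > 0 \<longrightarrow>
      (\<exists>B\<in>sets \<mu>. B \<subseteq> A \<and> 0 < emeasure \<mu> B \<and> emeasure \<mu> B < emeasure \<mu> A))"

definition gentleman_solution :: "nat \<Rightarrow> (nat \<Rightarrow> 'a measure) \<Rightarrow> 'a set \<Rightarrow> (nat \<Rightarrow> 'a set) \<Rightarrow> bool" where
  "gentleman_solution r \<mu> H F \<longleftrightarrow>
     (\<forall>i\<in>{1..r}. F i \<in> sets (\<mu> i)) \<and>
     (\<Union>i\<in>{1..r}. F i) = H \<and>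
     (\<forall>i\<in>{1..r}. \<forall>j\<in>{1..r}. i \<noteq> j \<longrightarrow> F i \<inter> F j = {}) \<and>
     (\<forall>i\<in>{1..r}. \<forall>j\<in>{1..r}. measure (\<mu> i) (F i) \<le> measure (\<mu> i) (F j))"

definition has_gentleman_solution :: "nat \<Rightarrow> (nat \<Rightarrow> 'a measure) \<Rightarrow> 'a set \<Rightarrow> bool" where
  "has_gentleman_solution r \<mu> H \<longleftrightarrow> (\<exists>F. gentleman_solution r \<mu> H F)"

end

theory Submission
  imports Defs
begin

text \<open>Every step \<open>k\<close> with \<open>h k = l\<close> removes at least the fraction \<open>2^-(r-1)\<close> of the
\<open>\<mu> l\<close>-mass of the part of \<open>M\<close> not yet covered, and the uncovered part only shrinks in
between. Hence after the \<open>n\<close>-th such step at most the fraction \<open>(1 - 2^-(r-1))^n\<close> of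
\<open>\<mu> l M\<close> is left.\<close>

lemma (in finite_measure) measure_Diff_le_of_large_subset:
  assumes "A \<in> sets M" "B \<in> sets M" "B \<subseteq> A" "q > 0"
    and "measure M A / q \<le> measure M B"
  shows "measure M (A - B) \<le> (q - 1) / q * measure M A"
proof -
  have "measure M (A - B) = measure M A - measure M B"
    using assms by (simp add: finite_measure_Diff)
  also have "\<dots> \<le> measure M A - measure M A / q"
    using assms(5) by simp
  also have "\<dots> = (q - 1) / q * measure M A"
    using \<open>q > 0\<close> by (simp add: field_simps)
  finally show ?thesis .
qed

lemma antimono_geometric_decay_along_subsequence:
  fixes f :: "nat \<Rightarrow> real" and kk :: "nat \<Rightarrow> nat"
  assumes f: "antimono f"
    and kk: "strict_mono_on {1..} kk"
    and decay: "\<And>m. m \<ge> 1 \<Longrightarrow> f (Suc (kk m)) \<le> c * f (kk m)"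
    and "c \<ge> 0" "n \<ge> 1"
  shows "f (Suc (kk n)) \<le> c ^ n * f 0"
  using \<open>n \<ge> 1\<close>
proof (induction n rule: dec_induct)
  case base
  have "f (Suc (kk 1)) \<le> c * f (kk 1)"
    using decay by simp
  also have "\<dots> \<le> c * f 0"
    using f \<open>c \<ge> 0\<close> by (simp add: antimonoD mult_left_mono)
  finally show ?case by simp
next
  case (step m)
  have gap: "Suc (kk m) \<le> kk (Suc m)"
    using kk step.hyps by (simp add: strict_mono_on_def Suc_le_eq)
  have "f (Suc (kk (Suc m))) \<le> c * f (kk (Suc m))"
    using decay by simp
  also have "\<dots> \<le> c * f (Suc (kk m))"
    by (rule mult_left_mono[OF antimonoD[OF f gap] \<open>c \<ge> 0\<close>])
  also have "\<dots> \<le> c * (c ^ m * f 0)"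
    using step.IH \<open>c \<ge> 0\<close> by (simp add: mult_left_mono)
  finally show ?case by simp
qed

theorem lemma11:
  fixes M :: "'a set" and \<Sigma> :: "'a set set" and r :: nat
    and \<mu> :: "nat \<Rightarrow> 'a measure"
    and H :: "nat \<Rightarrow> 'a set" and h :: "nat \<Rightarrow> nat"
    and l :: nat and n :: nat and kk :: "nat \<Rightarrow> nat"
  assumes sa: "sigma_algebra M \<Sigma>"
    and r: "r \<ge> 1"
    and space: "\<And>i. i \<in> {1..r} \<Longrightarrow> space (\<mu> i) = M"
    and sets: "\<And>i. i \<in> {1..r} \<Longrightarrow> sets (\<mu> i) = \<Sigma>"
    and fin: "\<And>i. i \<in> {1..r} \<Longrightarrow> finite_measure (\<mu> i)"
    and na: "\<And>i. i \<in> {1..r} \<Longrightarrow> nonatomic (\<mu> i)"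
    and Hmeas: "\<And>k. k \<ge> 1 \<Longrightarrow> H k \<in> \<Sigma>"
    and hrange: "\<And>k. k \<ge> 1 \<Longrightarrow> h k \<in> {1..r}"
    and Hsub: "\<And>k. k \<ge> 1 \<Longrightarrow> H k \<subseteq> M - (\<Union>i\<in>{1..<k}. H i)"
    and Hgent: "\<And>k. k \<ge> 1 \<Longrightarrow> has_gentleman_solution r \<mu> (H k)"
    and Hbig: "\<And>k. k \<ge> 1 \<Longrightarrow>
       measure (\<mu> (h k)) (H k) \<ge> measure (\<mu> (h k)) (M - (\<Union>i\<in>{1..<k}. H i)) / 2 ^ (r - 1)"
    and hl: "l \<in> {1..r}"
    and inf: "infinite {k. k \<ge> 1 \<and> h k = l}"
    and kk_mono: "strict_mono_on {1..} kk"
    and kk_range: "kk ` {1..} = {k. k \<ge> 1 \<and> h k = l}"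
    and n: "n \<ge> 1"
  shows "measure (\<mu> l) (M - (\<Union>i\<in>{1..kk n}. H i))
           \<le> ((2 ^ (r - 1) - 1) / 2 ^ (r - 1)) ^ n * measure (\<mu> l) M"
proof -
  define R where "R k = M - (\<Union>i\<in>{1..<k}. H i)" for k
  interpret finite_measure "\<mu> l" using fin hl by simp
  have sets_l: "sets (\<mu> l) = \<Sigma>" and space_l: "space (\<mu> l) = M"
    using sets space hl by auto
  have R_sets: "R k \<in> sets (\<mu> l)" for k
  proof -
    have "(\<Union>i\<in>{1..<k}. H i) \<in> sets (\<mu> l)"
      using Hmeas sets_l by (intro sets.finite_UN) auto
    then show ?thesis
      unfolding R_def using space_l sets.compl_sets by metis
  qed
  have "antimono (\<lambda>k. measure (\<mu> l) (R k))"
    using R_sets by (intro antimonoI finite_measure_mono) (auto simp: R_def)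
  moreover have "measure (\<mu> l) (R (Suc (kk m)))
      \<le> (2 ^ (r - 1) - 1) / 2 ^ (r - 1) * measure (\<mu> l) (R (kk m))" if "m \<ge> 1" for m
  proof -
    have k: "kk m \<ge> 1" "h (kk m) = l"
      using kk_range that by blast+
    then have R_Suc: "R (Suc (kk m)) = R (kk m) - H (kk m)"
      by (auto simp: R_def less_Suc_eq)
    have "measure (\<mu> l) (R (kk m)) / 2 ^ (r - 1) \<le> measure (\<mu> l) (H (kk m))"
      using Hbig[OF k(1)] k(2) by (simp add: R_def)
    then show ?thesis
      unfolding R_Suc using Hmeas[OF k(1)] Hsub[OF k(1)] sets_l R_sets
      by (intro measure_Diff_le_of_large_subset) (auto simp: R_def)
  qed
  ultimately have "measure (\<mu> l) (R (Suc (kk n)))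
      \<le> ((2 ^ (r - 1) - 1) / 2 ^ (r - 1)) ^ n * measure (\<mu> l) (R 0)"
    using kk_mono n by (intro antimono_geometric_decay_along_subsequence) auto
  moreover have "R (Suc (kk n)) = M - (\<Union>i\<in>{1..kk n}. H i)" "R 0 = M"
    by (simp_all add: R_def atLeastLessThanSuc_atLeastAtMost)
  ultimately show ?thesis by simp
qed

end
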